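(* Let $n=2$, $\Gamma=I_2$, $\Sigma=\begin{pmatrix}1&\rho\\ \rho&1\end{pmatrix}$ with $\rho\in(-1,1)$, and $M=\begin{pmatrix}M_{11}&M_{12}\\ M_{21}&M_{22}\end{pmatrix}$ arbitrary. Let $\kappa=\rho(M_{11}+M_{22})-(M_{12}+M_{21})$ and let $\Delta$ be the Nash equilibrium (matrix of deviations of negotiating positions from true beliefs). (1) If only agent $k$ is strategic ($S=\{k\}$), then $\Delta_{ij}=\kappa/3$ if $i\neq k$ and $j=k$, and $\Delta_{ij}=0$ otherwise. (2) If both agents are strategic ($S=\{1,2\}$), then $\Delta_{ij}=\kappa/4$ if $i\neq j$ and $\Delta_{ii}=0$.
   Context: Fix agents $[n]=\{1,\dots,n\}$. Let $\Sigma\in\mathbb{R}^{n\times n}$ be symmetric positive definite, $\Gamma=\mathrm{diag}(\gamma_1,\dots,\gamma_n)$ with all $\gamma_i>0$, and let $M\in\mathbb{R}^{n\times n}$ be the matrix of true beliefs with $i$-th column $\mu_i=Me_i$. For a matrix of reported negotiating positions $M'\in\mathbb{R}^{n\times n}$, the stable point for $M'$ is the unique pair $(W,P)$ of real $n\times n$ matrices with $W=W^T$, $P^T=-P$ and $M'-P=2\Sigma W\Gamma$. Agent $i$'s (true) utility is $g_i(W,P)=w_i^T(\mu_i-Pe_i)-\gamma_i\, w_i^T\Sigma w_i$, $w_i=We_i$. $S\subseteq[n]$ is the set of strategic agents; honest agents $i\notin S$ report $\mu_i'=\mu_i$, and each $k\in S$ reports $\mu_k'=\mu_k+\Delta e_k$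 with arbitrary $\Delta e_k\in\mathbb{R}^n$. A Nash equilibrium is a matrix $\Delta$ with $\Delta e_j=0$ for $j\notin S$ such that for each $k\in S$, given the other columns, the column $\Delta e_k$ maximizes $g_k$ at the stable point for $M+\Delta$. *)

theory Defs
  imports "HOL-Analysis.Analysis"
begin

text \<open>Matrices are indexed A $ i $ j = entry in row i, column j; the i-th column is A *v axis i 1.\<close>

definition stable_point ::
  "real^'n^'n \<Rightarrow> real^'n^'n \<Rightarrow> real^'n^'n \<Rightarrow> real^'n^'n \<Rightarrow> real^'n^'n \<Rightarrow> bool" where
  "stable_point Sig Gam M' W P \<longleftrightarrow>
     transpose W = W \<and> transpose P = - P \<and> M' - P = 2 *\<^sub>R (Sig ** W ** Gam)"

definition stable_pair :: "real^'n^'n \<Rightarrow> real^'n^'n \<Rightarrow> real^'n^'n \<Rightarrow> (real^'n^'n) \<times> (real^'n^'n)" where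
  "stable_pair Sig Gam M' = (THE (W, P). stable_point Sig Gam M' W P)"

definition utility ::
  "real^'n^'n \<Rightarrow> real^'n^'n \<Rightarrow> real^'n^'n \<Rightarrow> 'n \<Rightarrow> real^'n^'n \<Rightarrow> real^'n^'n \<Rightarrow> real" where
  "utility Sig Gam M i W P =
     (let w = W *v axis i 1 in
       w \<bullet> (M *v axis i 1 - P *v axis i 1) - Gam $ i $ i * (w \<bullet> (Sig *v w)))"

definition payoff :: "real^'n^'n \<Rightarrow> real^'n^'n \<Rightarrow> real^'n^'n \<Rightarrow> 'n \<Rightarrow> real^'n^'n \<Rightarrow> real" where
  "payoff Sig Gam M i D =
     (case stable_pair Sig Gam (M + D) of (W, P) \<Rightarrow> utility Sig Gam M i W P)"

definition replace_col :: "real^'n^'n \<Rightarrow> 'n \<Rightarrow> real^'n \<Rightarrow> real^'n^'n" where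
  "replace_col D k d = (\<chi> i j. if j = k then d $ i else D $ i $ j)"

definition nash_equilibrium ::
  "real^'n^'n \<Rightarrow> real^'n^'n \<Rightarrow> real^'n^'n \<Rightarrow> 'n set \<Rightarrow> real^'n^'n \<Rightarrow> bool" where
  "nash_equilibrium Sig Gam M S D \<longleftrightarrow>
     (\<forall>j. j \<notin> S \<longrightarrow> D *v axis j 1 = 0) \<and>
     (\<forall>k\<in>S. \<forall>d. payoff Sig Gam M k (replace_col D k d) \<le> payoff Sig Gam M k D)"

end

theory Submission
  imports Defs
begin

text \<open>
  For \<open>\<Sigma> = [[1,\<rho>],[\<rho>,1]]\<close> and \<open>\<Gamma> = I\<close> the stable point for reports \<open>X\<close> is explicit:
  \<open>W\<close> has off-diagonal entry \<open>b = (X\<^sub>1\<^sub>2 + X\<^sub>2\<^sub>1 - \<rho>(X\<^sub>1\<^sub>1 + X\<^sub>2\<^sub>2)) / (4(1 - \<rho>\<^sup>2))\<close> and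
  diagonal entries \<open>X\<^sub>i\<^sub>i/2 - \<rho> b\<close>. Written in terms of its own reported column \<open>x\<close>, an
  agent's true utility separates as \<open>C - (x\<^sub>1 - m\<^sub>1)\<^sup>2/4 - 3(1 - \<rho>\<^sup>2)(b - b\<^sub>0)\<^sup>2\<close>
  (own coordinate first, \<open>m\<close> the true column, \<open>C\<close> and \<open>b\<^sub>0\<close> independent of \<open>x\<close>),
  so the unique best response reports the own entry truthfully and shifts the other one by
  \<open>(\<rho>(m\<^sub>1 + y\<^sub>2) - m\<^sub>2 - y\<^sub>1)/3\<close>, where \<open>y\<close> is the other agent's reported column.
  With one strategic agent this shift is \<open>\<kappa>/3\<close>; with two, the two coupled best-response
  equations have the unique solution \<open>\<kappa>/4\<close>.
\<close>

definition corr_matrix :: "real \<Rightarrow> real^2^2" where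
  "corr_matrix r = (\<chi> i j. if i = j then 1 else r)"

definition stable_offdiag :: "real \<Rightarrow> real^2^2 \<Rightarrow> real" where
  "stable_offdiag r X = (X$1$2 + X$2$1 - r * (X$1$1 + X$2$2)) / (4 * (1 - r\<^sup>2))"

definition stable_skew :: "real \<Rightarrow> real^2^2 \<Rightarrow> real" where
  "stable_skew r X = (X$1$2 - X$2$1 + r * (X$1$1 - X$2$2)) / 2"

definition stable_W :: "real \<Rightarrow> real^2^2 \<Rightarrow> real^2^2" where
  "stable_W r X = (\<chi> i j. if i = j then X$i$i / 2 - r * stable_offdiag r X else stable_offdiag r X)"

definition stable_P :: "real \<Rightarrow> real^2^2 \<Rightarrow> real^2^2" where
  "stable_P r X = (\<chi> i j. if i = j then 0 else if i = 1 then stable_skew r X else - stable_skew r X)"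

lemma corr_stable_system_iff:
  fixes r a b c p x11 x12 x21 x22 :: real
  assumes "r\<^sup>2 \<noteq> 1"
  shows "x11 = 2 * a + 2 * r * b \<and> x12 - p = 2 * b + 2 * r * c \<and>
         x21 + p = 2 * r * a + 2 * b \<and> x22 = 2 * r * b + 2 * c \<longleftrightarrow>
         b = (x12 + x21 - r * (x11 + x22)) / (4 * (1 - r\<^sup>2)) \<and>
         a = x11 / 2 - r * b \<and> c = x22 / 2 - r * b \<and> p = (x12 - x21 + r * (x11 - x22)) / 2"
    (is "?system \<longleftrightarrow> ?solution")
proof -
  have b: "b = (x12 + x21 - r * (x11 + x22)) / (4 * (1 - r\<^sup>2)) \<longleftrightarrow>
      4 * b - 4 * (r * r * b) = x12 + x21 - r * x11 - r * x22"
    using assms by (simp add: field_simps power2_eq_square)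
  show ?thesis
  proof
    assume ?system
    then show ?solution unfolding b by (simp add: algebra_simps)
  next
    assume ?solution
    then have a: "a = x11 / 2 - r * b" and c: "c = x22 / 2 - r * b"
      and p: "p = (x12 - x21 + r * (x11 - x22)) / 2"
      and "4 * b - 4 * (r * r * b) = x12 + x21 - r * x11 - r * x22"
      unfolding b by auto
    then show ?system unfolding a c p by (simp add: field_simps)
  qed
qed

lemma stable_point_corr_matrix_iff:
  fixes r :: real and X W P :: "real^2^2"
  assumes "r\<^sup>2 \<noteq> 1"
  shows "stable_point (corr_matrix r) (mat 1) X W P \<longleftrightarrow> W = stable_W r X \<and> P = stable_P r X"
proof -
  have "stable_point (corr_matrix r) (mat 1) X W P \<longleftrightarrow>
     W$2$1 = W$1$2 \<and> P$1$1 = 0 \<and> P$2$2 = 0 \<and> P$2$1 = - P$1$2 \<and>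
     X$1$1 = 2 * W$1$1 + 2 * r * W$1$2 \<and> X$1$2 - P$1$2 = 2 * W$1$2 + 2 * r * W$2$2 \<and>
     X$2$1 + P$1$2 = 2 * r * W$1$1 + 2 * W$1$2 \<and> X$2$2 = 2 * r * W$1$2 + 2 * W$2$2"
    unfolding stable_point_def matrix_mul_rid
    by (auto simp: vec_eq_iff forall_2 transpose_def matrix_matrix_mult_def sum_2 corr_matrix_def)
  also have "\<dots> \<longleftrightarrow> W$2$1 = W$1$2 \<and> P$1$1 = 0 \<and> P$2$2 = 0 \<and> P$2$1 = - P$1$2 \<and>
     W$1$2 = stable_offdiag r X \<and> W$1$1 = X$1$1 / 2 - r * W$1$2 \<and>
     W$2$2 = X$2$2 / 2 - r * W$1$2 \<and> P$1$2 = stable_skew r X"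
    unfolding stable_offdiag_def stable_skew_def using corr_stable_system_iff[OF assms] by blast
  also have "\<dots> \<longleftrightarrow> W = stable_W r X \<and> P = stable_P r X"
    by (auto simp: vec_eq_iff forall_2 stable_W_def stable_P_def)
  finally show ?thesis .
qed

lemma stable_pair_corr_matrix:
  fixes r :: real and X :: "real^2^2"
  assumes "r\<^sup>2 \<noteq> 1"
  shows "stable_pair (corr_matrix r) (mat 1) X = (stable_W r X, stable_P r X)"
  unfolding stable_pair_def
  by (rule the_equality) (auto simp: stable_point_corr_matrix_iff[OF assms])

text \<open>
  The true utility of an agent whose true column is \<open>(m\<^sub>1, m\<^sub>2)\<close>, whose reported column is
  \<open>(x\<^sub>1, x\<^sub>2)\<close> and whose opponent reports \<open>(y\<^sub>1, y\<^sub>2)\<close>, all listed with the agent's own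
  coordinate first; \<open>b\<close>, \<open>a\<close> and \<open>p\<close> are the off-diagonal of \<open>W\<close>, the agent's diagonal
  entry of \<open>W\<close> and the agent's off-diagonal entry of \<open>P\<close>.
\<close>
definition agent_utility :: "real \<Rightarrow> real \<Rightarrow> real \<Rightarrow> real \<Rightarrow> real \<Rightarrow> real \<Rightarrow> real \<Rightarrow> real" where
  "agent_utility r m1 m2 x1 x2 y1 y2 =
     (let b = (x2 + y1 - r * (x1 + y2)) / (4 * (1 - r\<^sup>2));
          a = x1 / 2 - r * b;
          p = (y1 - x2 + r * (x1 - y2)) / 2
      in a * m1 + b * (m2 + p) - (a\<^sup>2 + 2 * r * a * b + b\<^sup>2))"

lemma agent_utility_separable:
  fixes r m1 m2 x1 x2 y1 y2 :: real
  assumes "r\<^sup>2 \<noteq> 1"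
  defines "b \<equiv> (x2 + y1 - r * (x1 + y2)) / (4 * (1 - r\<^sup>2))"
    and "b\<^sub>0 \<equiv> (m2 + y1 - r * (m1 + y2)) / (6 * (1 - r\<^sup>2))"
  shows "agent_utility r m1 m2 x1 x2 y1 y2
       = m1\<^sup>2 / 4 + 3 * (1 - r\<^sup>2) * b\<^sub>0\<^sup>2 - (x1 - m1)\<^sup>2 / 4 - 3 * (1 - r\<^sup>2) * (b - b\<^sub>0)\<^sup>2"
proof -
  define s where "s = 1 - r\<^sup>2"
  have "s \<noteq> 0" using assms by (simp add: s_def)
  have p: "(y1 - x2 + r * (x1 - y2)) / 2 = y1 - r * y2 - 2 * s * b"
    using \<open>s \<noteq> 0\<close> by (simp add: b_def s_def[symmetric] field_simps)
  have b\<^sub>0: "m2 + y1 - r * y2 - r * m1 = 6 * s * b\<^sub>0"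
    using \<open>s \<noteq> 0\<close> by (simp add: b\<^sub>0_def s_def[symmetric] field_simps)
  have "agent_utility r m1 m2 x1 x2 y1 y2
      = (x1 / 2 - r * b) * m1 + b * (m2 + (y1 - r * y2 - 2 * s * b))
        - ((x1 / 2 - r * b)\<^sup>2 + 2 * r * (x1 / 2 - r * b) * b + b\<^sup>2)"
    unfolding agent_utility_def Let_def b_def[symmetric] p ..
  also have "\<dots> = x1 * m1 / 2 - x1\<^sup>2 / 4 + b * (m2 + y1 - r * y2 - r * m1) - 3 * s * b\<^sup>2"
    by (simp add: s_def algebra_simps power2_eq_square)
  also have "\<dots> = m1\<^sup>2 / 4 + 3 * s * b\<^sub>0\<^sup>2 - (x1 - m1)\<^sup>2 / 4 - 3 * s * (b - b\<^sub>0)\<^sup>2"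
    unfolding b\<^sub>0 by (simp add: field_simps power2_eq_square)
  finally show ?thesis by (simp add: s_def)
qed

lemma agent_utility_maximizer_iff:
  fixes r m1 m2 y1 y2 x1' x2' :: real
  assumes "r\<^sup>2 < 1"
  shows "(\<forall>x1 x2. agent_utility r m1 m2 x1 x2 y1 y2 \<le> agent_utility r m1 m2 x1' x2' y1 y2) \<longleftrightarrow>
         x1' = m1 \<and> x2' = m2 + (r * (m1 + y2) - m2 - y1) / 3"
proof -
  define s where "s = 1 - r\<^sup>2"
  have "s > 0" using assms by (simp add: s_def)
  define b where "b x1 x2 = (x2 + y1 - r * (x1 + y2)) / (4 * s)" for x1 x2
  define b\<^sub>0 where "b\<^sub>0 = (m2 + y1 - r * (m1 + y2)) / (6 * s)"
  define C where "C = m1\<^sup>2 / 4 + 3 * s * b\<^sub>0\<^sup>2"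
  have U: "agent_utility r m1 m2 x1 x2 y1 y2 = C - (x1 - m1)\<^sup>2 / 4 - 3 * s * (b x1 x2 - b\<^sub>0)\<^sup>2"
    for x1 x2
    using agent_utility_separable[of r] assms by (simp add: C_def b_def b\<^sub>0_def s_def)
  have nonneg: "0 \<le> (x1 - m1)\<^sup>2 / 4 \<and> 0 \<le> 3 * s * (b x1 x2 - b\<^sub>0)\<^sup>2" for x1 x2
    using \<open>s > 0\<close> by simp
  have U_le_C: "agent_utility r m1 m2 x1 x2 y1 y2 \<le> C" for x1 x2
    unfolding U using nonneg[of x1 x2] by linarith
  have U_eq_C: "agent_utility r m1 m2 x1 x2 y1 y2 = C \<longleftrightarrow>
      x1 = m1 \<and> x2 = m2 + (r * (m1 + y2) - m2 - y1) / 3" for x1 x2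
  proof -
    have "agent_utility r m1 m2 x1 x2 y1 y2 = C \<longleftrightarrow>
        (x1 - m1)\<^sup>2 / 4 = 0 \<and> 3 * s * (b x1 x2 - b\<^sub>0)\<^sup>2 = 0"
      unfolding U using nonneg[of x1 x2] by linarith
    also have "\<dots> \<longleftrightarrow> x1 = m1 \<and> b m1 x2 = b\<^sub>0"
      using \<open>s > 0\<close> by auto
    also have "b m1 x2 = b\<^sub>0 \<longleftrightarrow> x2 = m2 + (r * (m1 + y2) - m2 - y1) / 3"
      using \<open>s > 0\<close> unfolding b_def b\<^sub>0_def by (simp add: frac_eq_eq) (auto simp: field_simps)
    finally show ?thesis .
  qed
  show ?thesis
    by (metis U_eq_C U_le_C order_antisym)
qed

lemma utility_corr_matrix_agent1:
  "utility (corr_matrix r) (mat 1) M 1 W P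
   = W$1$1 * (M$1$1 - P$1$1) + W$2$1 * (M$2$1 - P$2$1) - ((W$1$1)\<^sup>2 + 2 * r * W$1$1 * W$2$1 + (W$2$1)\<^sup>2)"
  unfolding utility_def matrix_vector_mult_basis
  by (simp add: column_def inner_vec_def sum_2 matrix_vector_mult_def mat_def corr_matrix_def
      algebra_simps power2_eq_square)

lemma utility_corr_matrix_agent2:
  "utility (corr_matrix r) (mat 1) M 2 W P
   = W$2$2 * (M$2$2 - P$2$2) + W$1$2 * (M$1$2 - P$1$2) - ((W$2$2)\<^sup>2 + 2 * r * W$2$2 * W$1$2 + (W$1$2)\<^sup>2)"
  unfolding utility_def matrix_vector_mult_basis
  by (simp add: column_def inner_vec_def sum_2 matrix_vector_mult_def mat_def corr_matrix_def
      algebra_simps power2_eq_square)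

lemma payoff_corr_matrix_agent1:
  fixes r :: real and M D :: "real^2^2"
  assumes "r\<^sup>2 \<noteq> 1"
  shows "payoff (corr_matrix r) (mat 1) M 1 D
       = agent_utility r (M$1$1) (M$2$1) (M$1$1 + D$1$1) (M$2$1 + D$2$1) (M$1$2 + D$1$2) (M$2$2 + D$2$2)"
proof -
  have b: "((M$2$1 + D$2$1) + (M$1$2 + D$1$2) - r * ((M$1$1 + D$1$1) + (M$2$2 + D$2$2)))
      / (4 * (1 - r\<^sup>2)) = stable_offdiag r (M + D)"
    by (simp add: stable_offdiag_def add_ac)
  have p: "((M$1$2 + D$1$2) - (M$2$1 + D$2$1) + r * ((M$1$1 + D$1$1) - (M$2$2 + D$2$2))) / 2
      = stable_skew r (M + D)"
    by (simp add: stable_skew_def)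
  show ?thesis
    unfolding payoff_def stable_pair_corr_matrix[OF assms] prod.case utility_corr_matrix_agent1
      agent_utility_def Let_def b p
    by (simp add: stable_W_def stable_P_def)
qed

lemma payoff_corr_matrix_agent2:
  fixes r :: real and M D :: "real^2^2"
  assumes "r\<^sup>2 \<noteq> 1"
  shows "payoff (corr_matrix r) (mat 1) M 2 D
       = agent_utility r (M$2$2) (M$1$2) (M$2$2 + D$2$2) (M$1$2 + D$1$2) (M$2$1 + D$2$1) (M$1$1 + D$1$1)"
proof -
  have b: "((M$1$2 + D$1$2) + (M$2$1 + D$2$1) - r * ((M$2$2 + D$2$2) + (M$1$1 + D$1$1)))
      / (4 * (1 - r\<^sup>2)) = stable_offdiag r (M + D)"
    by (simp add: stable_offdiag_def add_ac)
  have p: "((M$2$1 + D$2$1) - (M$1$2 + D$1$2) + r * ((M$2$2 + D$2$2) - (M$1$1 + D$1$1))) / 2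
      = - stable_skew r (M + D)"
    by (simp add: stable_skew_def field_simps)
  show ?thesis
    unfolding payoff_def stable_pair_corr_matrix[OF assms] prod.case utility_corr_matrix_agent2
      agent_utility_def Let_def b p
    by (simp add: stable_W_def stable_P_def)
qed

lemma forall_vector_2_shift:
  fixes P :: "real \<Rightarrow> real \<Rightarrow> bool" and i j :: 2 and a b :: real
  assumes "i \<noteq> j"
  shows "(\<forall>d::real^2. P (a + d$i) (b + d$j)) \<longleftrightarrow> (\<forall>x y. P x y)"
proof
  assume h: "\<forall>d::real^2. P (a + d$i) (b + d$j)"
  show "\<forall>x y. P x y"
  proof (intro allI)
    fix x y
    show "P x y"
      using h[rule_format, of "\<chi> k. if k = i then x - a else y - b"] assms by simp
  qed
qed simp

lemma best_response_agent1_iff: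
  fixes r :: real and M D :: "real^2^2"
  assumes "r\<^sup>2 < 1"
  shows "(\<forall>d. payoff (corr_matrix r) (mat 1) M 1 (replace_col D 1 d)
             \<le> payoff (corr_matrix r) (mat 1) M 1 D) \<longleftrightarrow>
         D$1$1 = 0 \<and> D$2$1 = (r * (M$1$1 + M$2$2 + D$2$2) - M$2$1 - M$1$2 - D$1$2) / 3"
proof -
  let ?U = "\<lambda>x1 x2. agent_utility r (M$1$1) (M$2$1) x1 x2 (M$1$2 + D$1$2) (M$2$2 + D$2$2)"
  have "r\<^sup>2 \<noteq> 1" using assms by simp
  then have "(\<forall>d. payoff (corr_matrix r) (mat 1) M 1 (replace_col D 1 d)
             \<le> payoff (corr_matrix r) (mat 1) M 1 D) \<longleftrightarrow>
      (\<forall>x1 x2. ?U x1 x2 \<le> ?U (M$1$1 + D$1$1) (M$2$1 + D$2$1))"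
    using forall_vector_2_shift[of 1 2 "\<lambda>x1 x2. ?U x1 x2 \<le> ?U (M$1$1 + D$1$1) (M$2$1 + D$2$1)"]
    by (simp add: payoff_corr_matrix_agent1 replace_col_def)
  then show ?thesis
    by (simp add: agent_utility_maximizer_iff[OF assms] algebra_simps)
qed

lemma best_response_agent2_iff:
  fixes r :: real and M D :: "real^2^2"
  assumes "r\<^sup>2 < 1"
  shows "(\<forall>d. payoff (corr_matrix r) (mat 1) M 2 (replace_col D 2 d)
             \<le> payoff (corr_matrix r) (mat 1) M 2 D) \<longleftrightarrow>
         D$2$2 = 0 \<and> D$1$2 = (r * (M$1$1 + M$2$2 + D$1$1) - M$1$2 - M$2$1 - D$2$1) / 3"
proof -
  let ?U = "\<lambda>x1 x2. agent_utility r (M$2$2) (M$1$2) x1 x2 (M$2$1 + D$2$1) (M$1$1 + D$1$1)"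
  have "r\<^sup>2 \<noteq> 1" using assms by simp
  then have "(\<forall>d. payoff (corr_matrix r) (mat 1) M 2 (replace_col D 2 d)
             \<le> payoff (corr_matrix r) (mat 1) M 2 D) \<longleftrightarrow>
      (\<forall>x1 x2. ?U x1 x2 \<le> ?U (M$2$2 + D$2$2) (M$1$2 + D$1$2))"
    using forall_vector_2_shift[of 2 1 "\<lambda>x1 x2. ?U x1 x2 \<le> ?U (M$2$2 + D$2$2) (M$1$2 + D$1$2)"]
    by (simp add: payoff_corr_matrix_agent2 replace_col_def)
  then show ?thesis
    by (simp add: agent_utility_maximizer_iff[OF assms] algebra_simps)
qed

lemma nash_equilibrium_corr_matrix_iff:
  fixes r :: real and M D :: "real^2^2" and S :: "2 set"
  assumes "r\<^sup>2 < 1"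
  shows "nash_equilibrium (corr_matrix r) (mat 1) M S D \<longleftrightarrow>
     (if 1 \<in> S then D$1$1 = 0 \<and> D$2$1 = (r * (M$1$1 + M$2$2 + D$2$2) - M$2$1 - M$1$2 - D$1$2) / 3
      else D$1$1 = 0 \<and> D$2$1 = 0) \<and>
     (if 2 \<in> S then D$2$2 = 0 \<and> D$1$2 = (r * (M$1$1 + M$2$2 + D$1$1) - M$1$2 - M$2$1 - D$2$1) / 3
      else D$1$2 = 0 \<and> D$2$2 = 0)"
proof -
  have ball: "(\<forall>k\<in>S. P k) \<longleftrightarrow> (1 \<in> S \<longrightarrow> P 1) \<and> (2 \<in> S \<longrightarrow> P 2)" for P :: "2 \<Rightarrow> bool"
    by (metis exhaust_2)
  have column_zero: "D *v axis j 1 = 0 \<longleftrightarrow> D$1$j = 0 \<and> D$2$j = 0" for j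
    by (simp add: vec_eq_iff forall_2 matrix_vector_mult_basis column_def)
  show ?thesis
    unfolding nash_equilibrium_def ball forall_2 column_zero
      best_response_agent1_iff[OF assms] best_response_agent2_iff[OF assms]
    by auto
qed

theorem mainTheorem10:
  fixes rho :: real and M :: "real^2^2" and k :: 2
  assumes "-1 < rho" and "rho < 1"
  defines "Sig \<equiv> (\<chi> i j. if i = j then 1 else rho) :: real^2^2"
    and "Gam \<equiv> mat 1 :: real^2^2"
    and "kappa \<equiv> rho * (M $ 1 $ 1 + M $ 2 $ 2) - (M $ 1 $ 2 + M $ 2 $ 1)"
  shows "(\<forall>D. nash_equilibrium Sig Gam M {k} D \<longleftrightarrow>
             D = (\<chi> i j. if i \<noteq> k \<and> j = k then kappa / 3 else 0))
       \<and> (\<forall>D. nash_equilibrium Sig Gam M {1, 2} D \<longleftrightarrow>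
             D = (\<chi> i j. if i \<noteq> j then kappa / 4 else 0))"
proof -
  have "rho\<^sup>2 < 1" using assms(1,2) by (simp add: abs_square_less_1 abs_less_iff)
  have "Sig = corr_matrix rho" by (simp add: Sig_def corr_matrix_def)
  note N = nash_equilibrium_corr_matrix_iff[OF \<open>rho\<^sup>2 < 1\<close>, folded this Gam_def]
  have single_strategic: "nash_equilibrium Sig Gam M {k} D \<longleftrightarrow>
      D = (\<chi> i j. if i \<noteq> k \<and> j = k then kappa / 3 else 0)" for D
    using exhaust_2[of k] by (auto simp: N vec_eq_iff forall_2 kappa_def field_simps)
  have both_strategic: "nash_equilibrium Sig Gam M {1, 2} D \<longleftrightarrow>
      D = (\<chi> i j. if i \<noteq> j then kappa / 4 else 0)" for D
    by (auto simp: N vec_eq_iff forall_2 kappa_def field_simps)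
  show ?thesis using single_strategic both_strategic by blast
qed

end
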